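(* Let $n\ge 3$ and let $r=(r_1,\dots,r_n)$ be positive real numbers such that $2r_j\le \sum_{i=1}^n r_i$ for every $j$ and $r_1\pm r_2\pm\cdots\pm r_n\neq 0$ for every choice of signs. Let ${\cal U}_r=\{U=(u_1,\dots,u_n)\in (S^4)^n : \sum_{i=1}^n r_iu_i=0\}$, where $S^4\subset\mathbb{R}^5$ is the unit sphere, with $SO(5)$ acting diagonally. Then every degenerate $U\in{\cal U}_r$ is of type $2$ or of type $3$; that is, if the stabilizer of $U$ in $SO(5)$ is nontrivial, then it is a subgroup isomorphic to $SO(2)$ or to $SO(3)$.
   Context: An element $U\in{\cal U}_r$ (equivalently the closed polygon in $\mathbb{R}^5$ with edge vectors $r_iu_i$) is called degenerate if its stabilizer under the diagonal $SO(5)$-action is a nontrivial subgroup of $SO(5)$. A degenerate polygon is of type $k$ if its stabilizer is a subgroup $H_k\subseteq SO(5)$ isomorphic to $SO(k)$. *)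

theory Defs
  imports "HOL-Analysis.Analysis"
begin

definition SO :: "('n::finite) itself \<Rightarrow> (real^'n^'n) set" where
  "SO _ = {A. orthogonal_matrix A \<and> det A = 1}"

definition stabilizer :: "nat \<Rightarrow> (nat \<Rightarrow> real^5) \<Rightarrow> (real^5^5) set" where
  "stabilizer n u = {A \<in> SO TYPE(5). \<forall>i<n. A *v u i = u i}"

definition iso_to_SO :: "(real^'m^'m) set \<Rightarrow> ('k::finite) itself \<Rightarrow> bool" where
  "iso_to_SO G K \<longleftrightarrow> (\<exists>\<phi> :: real^'m^'m \<Rightarrow> real^'k^'k.
      bij_betw \<phi> G (SO K) \<and> (\<forall>A\<in>G. \<forall>B\<in>G. \<phi> (A ** B) = \<phi> A ** \<phi> B))"

definition polygon_space :: "nat \<Rightarrow> (nat \<Rightarrow> real) \<Rightarrow> (nat \<Rightarrow> real^5) set" where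
  "polygon_space n r = {u. (\<forall>i<n. norm (u i) = 1) \<and> (\<Sum>i<n. r i *\<^sub>R u i) = 0}"

end

theory Submission
  imports Defs
begin

(* The stabilizer of U is the pointwise stabilizer in SO(5) of V = span {u_1, ..., u_n}.
   The sign condition forbids all u_i to be parallel, so dim V >= 2. An orthogonal change
   of basis carries V onto the span of d coordinate axes, whose pointwise stabilizer is the
   group of block matrices diag(I_d, B) with B in SO(5 - d). For d >= 4 this group is
   trivial, which the hypothesis excludes; so d is 2 or 3 and the stabilizer is a copy
   of SO(3) or SO(2). *)

definition pointwise_stabilizer :: "(real^'n) set \<Rightarrow> (real^'n^'n) set" where
  "pointwise_stabilizer S = {A \<in> SO TYPE('n). \<forall>x\<in>S. A *v x = x}"

lemma mat_1_in_pointwise_stabilizer: "mat 1 \<in> pointwise_stabilizer S"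
  by (simp add: pointwise_stabilizer_def SO_def orthogonal_matrix_id)

lemma stabilizer_eq_pointwise_stabilizer: "stabilizer n u = pointwise_stabilizer (u ` {..<n})"
  by (auto simp: stabilizer_def pointwise_stabilizer_def)

lemma pointwise_stabilizer_span [simp]:
  fixes S :: "(real^'n) set"
  shows "pointwise_stabilizer (span S) = pointwise_stabilizer S"
proof -
  have "A *v x = x" if "\<forall>y\<in>S. A *v y = y" "x \<in> span S" for A :: "real^'n^'n" and x
    using linear_eq_on_span[of "(*v) A" id S x] that by (simp add: linear_id)
  then show ?thesis
    by (auto simp: pointwise_stabilizer_def dest: span_base)
qed

lemma pointwise_stabilizer_antimono:
  "S \<subseteq> S' \<Longrightarrow> pointwise_stabilizer S' \<subseteq> pointwise_stabilizer S"
  by (auto simp: pointwise_stabilizer_def)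

lemma orthogonal_matrix_conjugate_SO:
  fixes Q A :: "real^'n^'n"
  assumes "orthogonal_matrix Q" "A \<in> SO TYPE('n)"
  shows "Q ** A ** transpose Q \<in> SO TYPE('n)"
proof -
  have "det Q * det Q = 1"
    using assms(1) det_mul[of Q "transpose Q"] by (simp add: orthogonal_matrix_def)
  then show ?thesis
    using assms by (simp add: SO_def orthogonal_matrix_mul orthogonal_matrix_transpose det_mul)
qed

lemma orthogonal_matrix_cancel:
  fixes Q A :: "real^'n^'n"
  assumes "orthogonal_matrix Q"
  shows "Q ** (transpose Q ** A) = A" "transpose Q ** (Q ** A) = A"
  using assms by (simp_all add: matrix_mul_assoc orthogonal_matrix_def)

lemma pointwise_stabilizer_orthogonal_image:
  fixes Q :: "real^'n^'n"
  assumes Q: "orthogonal_matrix Q"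
  shows "pointwise_stabilizer ((*v) Q ` S) = (\<lambda>A. Q ** A ** transpose Q) ` pointwise_stabilizer S"
proof -
  note Q_inverse = Q[unfolded orthogonal_matrix_def] orthogonal_matrix_cancel[OF Q]
  have fix_iff: "Q ** B ** transpose Q *v (Q *v x) = Q *v x \<longleftrightarrow> B *v x = x" for B x
  proof -
    have "Q ** B ** transpose Q *v (Q *v x) = Q *v (B *v x)"
      by (simp add: matrix_vector_mul_assoc Q_inverse flip: matrix_mul_assoc)
    moreover have "Q *v y = Q *v x \<longleftrightarrow> y = x" for y
      by (metis Q_inverse(3) matrix_vector_mul_assoc matrix_mul_rid matrix_vector_mul_lid)
    ultimately show ?thesis by simp
  qed
  have conj_SO: "transpose Q ** A ** Q \<in> SO TYPE('n)" if "A \<in> SO TYPE('n)" for A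
    using orthogonal_matrix_conjugate_SO[of "transpose Q" A] Q that by simp
  have conj_inverse: "Q ** (transpose Q ** A ** Q) ** transpose Q = A" for A
    by (simp add: Q_inverse flip: matrix_mul_assoc)
  show ?thesis
  proof (intro equalityI subsetI)
    fix A assume "A \<in> pointwise_stabilizer ((*v) Q ` S)"
    then have "transpose Q ** A ** Q \<in> pointwise_stabilizer S"
      using conj_SO fix_iff[of "transpose Q ** A ** Q"]
      by (auto simp: pointwise_stabilizer_def conj_inverse)
    then show "A \<in> (\<lambda>A. Q ** A ** transpose Q) ` pointwise_stabilizer S"
      by (rule rev_image_eqI) (simp add: conj_inverse)
  next
    fix A assume "A \<in> (\<lambda>A. Q ** A ** transpose Q) ` pointwise_stabilizer S"
    then show "A \<in> pointwise_stabilizer ((*v) Q ` S)"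
      using orthogonal_matrix_conjugate_SO[OF Q] fix_iff by (auto simp: pointwise_stabilizer_def)
  qed
qed

lemma iso_to_SO_transfer:
  assumes f: "bij_betw f H G" "\<forall>A\<in>H. \<forall>B\<in>H. f (A ** B) = f A ** f B"
    and G: "iso_to_SO G K"
  shows "iso_to_SO H K"
proof -
  obtain \<phi> where \<phi>: "bij_betw \<phi> G (SO K)" "\<forall>A\<in>G. \<forall>B\<in>G. \<phi> (A ** B) = \<phi> A ** \<phi> B"
    using G unfolding iso_to_SO_def by blast
  have "bij_betw (\<phi> \<circ> f) H (SO K)"
    using bij_betw_trans[OF f(1) \<phi>(1)] .
  moreover have "\<forall>A\<in>H. \<forall>B\<in>H. (\<phi> \<circ> f) (A ** B) = (\<phi> \<circ> f) A ** (\<phi> \<circ> f) B"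
  proof (intro ballI)
    fix A B assume "A \<in> H" "B \<in> H"
    then show "(\<phi> \<circ> f) (A ** B) = (\<phi> \<circ> f) A ** (\<phi> \<circ> f) B"
      using f(2) \<phi>(2) bij_betw_apply[OF f(1)] by simp
  qed
  ultimately show ?thesis
    unfolding iso_to_SO_def by blast
qed

lemma iso_to_SO_orthogonal_conjugate:
  fixes Q :: "real^'n^'n"
  assumes Q: "orthogonal_matrix Q" and G: "iso_to_SO G K"
  shows "iso_to_SO ((\<lambda>A. Q ** A ** transpose Q) ` G) K"
proof (rule iso_to_SO_transfer[OF _ _ G])
  note Q_inverse = Q[unfolded orthogonal_matrix_def] orthogonal_matrix_cancel[OF Q]
  then have inverse: "transpose Q ** (Q ** A ** transpose Q) ** Q = A" for A
    by (simp flip: matrix_mul_assoc)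
  show "bij_betw (\<lambda>A. transpose Q ** A ** Q) ((\<lambda>A. Q ** A ** transpose Q) ` G) G"
    by (rule bij_betw_byWitness[where f' = "\<lambda>A. Q ** A ** transpose Q"])
       (auto simp: inverse Q_inverse simp flip: matrix_mul_assoc)
  show "\<forall>A\<in>(\<lambda>A. Q ** A ** transpose Q) ` G. \<forall>B\<in>(\<lambda>A. Q ** A ** transpose Q) ` G.
      transpose Q ** (A ** B) ** Q = (transpose Q ** A ** Q) ** (transpose Q ** B ** Q)"
    by (simp add: Q_inverse flip: matrix_mul_assoc)
qed

lemma orthonormal_frame_adapted_to_subspace:
  fixes V :: "(real^'n) set" and T :: "'n set"
  assumes V: "subspace V" and T: "card T = dim V"
  obtains q :: "'n \<Rightarrow> real^'n"
  where "\<And>i. norm (q i) = 1" "\<And>i j. i \<noteq> j \<Longrightarrow> orthogonal (q i) (q j)" "span (q ` T) = V"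
proof -
  obtain B1 where B1: "B1 \<subseteq> V" "pairwise orthogonal B1" "\<And>x. x \<in> B1 \<Longrightarrow> norm x = 1"
     "independent B1" "card B1 = dim V" "span B1 = V"
    using orthonormal_basis_subspace[OF V] by blast
  define W where "W = {y. \<forall>x\<in>V. orthogonal x y}"
  have "dim {y \<in> UNIV. \<forall>x\<in>V. orthogonal x y} + dim V = dim (UNIV :: (real^'n) set)"
    by (rule dim_subspace_orthogonal_to_vectors) (use V in auto)
  then have dim_W: "dim W = CARD('n) - dim V"
    unfolding W_def by simp
  obtain B2 where B2: "B2 \<subseteq> W" "pairwise orthogonal B2" "\<And>x. x \<in> B2 \<Longrightarrow> norm x = 1"
     "independent B2" "card B2 = dim W"
    using orthonormal_basis_subspace[OF subspace_orthogonal_to_vectors[of V], folded W_def] by blast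
  have "card (- T) = CARD('n) - dim V"
    using T by (simp add: card_Diff_subset Compl_eq_Diff_UNIV)
  then obtain b2 where b2: "bij_betw b2 (- T) B2"
    using finite_same_card_bij[of "- T" B2] B2(4,5) dim_W finiteI_independent by auto
  obtain b1 where b1: "bij_betw b1 T B1"
    using finite_same_card_bij[of T B1] B1(4,5) T finiteI_independent by auto
  define q where "q j = (if j \<in> T then b1 j else b2 j)" for j
  have q_in: "j \<in> T \<Longrightarrow> q j \<in> B1" "j \<notin> T \<Longrightarrow> q j \<in> B2" for j
    using b1 b2 by (auto simp: q_def bij_betw_def)
  have q_inj: "q i \<noteq> q j" if "i \<noteq> j" "i \<in> T \<longleftrightarrow> j \<in> T" for i j
    using b1 b2 that by (auto simp: q_def bij_betw_def inj_on_def)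
  show ?thesis
  proof
    show "norm (q i) = 1" for i
      using q_in B1(3) B2(3) by (cases "i \<in> T") auto
    show "orthogonal (q i) (q j)" if "i \<noteq> j" for i j
    proof (cases "i \<in> T \<longleftrightarrow> j \<in> T")
      case True
      then show ?thesis
        using q_inj[OF that] q_in B1(2) B2(2) by (cases "i \<in> T") (auto simp: pairwise_def)
    next
      case False
      then have "q i \<in> V \<and> q j \<in> W \<or> q j \<in> V \<and> q i \<in> W"
        using q_in B1(1) B2(1) by blast
      then show ?thesis
        by (auto simp: W_def orthogonal_commute)
    qed
    have "q ` T = B1"
      using b1 by (auto simp: q_def bij_betw_def)
    then show "span (q ` T) = V"
      using B1(6) by simp
  qed
qed

lemma orthogonal_matrix_onto_subspace:
  fixes V :: "(real^'n) set" and T :: "'n set"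
  assumes "subspace V" "card T = dim V"
  obtains Q where "orthogonal_matrix Q" "(*v) Q ` span ((\<lambda>j. axis j 1) ` T) = V"
proof -
  obtain q :: "'n \<Rightarrow> real^'n" where q: "\<And>i. norm (q i) = 1"
    "\<And>i j. i \<noteq> j \<Longrightarrow> orthogonal (q i) (q j)" "span (q ` T) = V"
    using orthonormal_frame_adapted_to_subspace[OF assms] by blast
  define Q :: "real^'n^'n" where "Q = (\<chi> i j. q j $ i)"
  have column_Q: "column j Q = q j" for j
    by (simp add: Q_def column_def)
  have "orthogonal_matrix Q"
    using q(1,2) by (simp add: orthogonal_matrix_orthonormal_columns column_Q)
  moreover have "(*v) Q ` span ((\<lambda>j. axis j 1) ` T) = V"
  proof -
    have "(*v) Q ` (\<lambda>j. axis j 1) ` T = q ` T"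
      by (auto simp: image_image matrix_vector_mult_basis column_Q)
    then show ?thesis
      using q(3) by (simp add: linear_span_image[symmetric])
  qed
  ultimately show ?thesis
    using that by blast
qed

lemma pointwise_stabilizer_subspace_conjugate:
  fixes V :: "(real^'n) set" and T :: "'n set"
  assumes "subspace V" "card T = dim V"
  obtains Q where "orthogonal_matrix Q"
    "pointwise_stabilizer V = (\<lambda>A. Q ** A ** transpose Q) ` pointwise_stabilizer ((\<lambda>j. axis j 1) ` T)"
proof -
  obtain Q where Q: "orthogonal_matrix Q" "(*v) Q ` span ((\<lambda>j. axis j 1) ` T) = V"
    using orthogonal_matrix_onto_subspace[OF assms] .
  have "pointwise_stabilizer V = pointwise_stabilizer ((*v) Q ` span ((\<lambda>j. axis j 1) ` T))"
    by (simp add: Q(2))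
  also have "\<dots> = (\<lambda>A. Q ** A ** transpose Q) ` pointwise_stabilizer ((\<lambda>j. axis j 1) ` T)"
    by (simp add: pointwise_stabilizer_orthogonal_image[OF Q(1)])
  finally show ?thesis
    using that Q(1) by blast
qed

definition identity_on_axes :: "'n set \<Rightarrow> 'a::zero_neq_one^'n^'n \<Rightarrow> bool" where
  "identity_on_axes T M \<longleftrightarrow> (\<forall>i j. i \<in> T \<or> j \<in> T \<longrightarrow> M $ i $ j = mat 1 $ i $ j)"

lemma identity_on_axes_antimono:
  "T \<subseteq> T' \<Longrightarrow> identity_on_axes T' M \<Longrightarrow> identity_on_axes T M"
  by (auto simp: identity_on_axes_def)

lemma identity_on_axes_entry:
  "identity_on_axes T M \<Longrightarrow> i \<in> T \<or> j \<in> T \<Longrightarrow> M $ i $ j = mat 1 $ i $ j"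
  unfolding identity_on_axes_def by blast

lemma identity_on_axes_mat_1 [simp]: "identity_on_axes T (mat 1)"
  by (simp add: identity_on_axes_def)

lemma identity_on_axes_transpose [simp]:
  "identity_on_axes T (transpose M) \<longleftrightarrow> identity_on_axes T M"
  by (auto simp: identity_on_axes_def transpose_def mat_def)

lemma identity_on_axes_mult:
  fixes M N :: "'a::semiring_1^'n^'n"
  assumes M: "identity_on_axes T M" and N: "identity_on_axes T N"
  shows "identity_on_axes T (M ** N)"
  unfolding identity_on_axes_def
proof (intro allI impI)
  fix i j assume "i \<in> T \<or> j \<in> T"
  then consider "i \<in> T" | "j \<in> T" by blast
  then show "(M ** N) $ i $ j = mat 1 $ i $ j"
  proof cases
    case 1
    then have "(M ** N) $ i $ j = N $ i $ j"
      using M by (simp add: identity_on_axes_def matrix_matrix_mult_def mat_def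
          if_distrib[where f = "\<lambda>x. x * _"] cong: if_cong)
    then show ?thesis
      using N 1 by (simp add: identity_on_axes_def)
  next
    case 2
    then have "(M ** N) $ i $ j = M $ i $ j"
      using N by (simp add: identity_on_axes_def matrix_matrix_mult_def mat_def
          if_distrib[where f = "(*) _"] cong: if_cong)
    then show ?thesis
      using M 2 by (simp add: identity_on_axes_def)
  qed
qed

lemma pointwise_stabilizer_axes_iff:
  fixes M :: "real^'n^'n"
  shows "M \<in> pointwise_stabilizer ((\<lambda>j. axis j 1) ` T) \<longleftrightarrow>
    M \<in> SO TYPE('n) \<and> identity_on_axes T M"
proof -
  have column_iff:
    "(\<forall>j\<in>T. M *v axis j 1 = axis j 1) \<longleftrightarrow> (\<forall>i. \<forall>j\<in>T. M $ i $ j = mat 1 $ i $ j)"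
    by (simp only: matrix_vector_mult_basis) (auto simp: column_def vec_eq_iff axis_def mat_def)
  have rows: "M $ i $ j = mat 1 $ i $ j"
    if "orthogonal_matrix M" "\<forall>i. \<forall>j\<in>T. M $ i $ j = mat 1 $ i $ j" "i \<in> T" for i j
  proof -
    have "M $ i $ j = (\<Sum>k\<in>UNIV. M $ k $ i * M $ k $ j)"
      using that(2,3) by (simp add: mat_def mult_if_delta)
    also have "\<dots> = (transpose M ** M) $ i $ j"
      by (simp add: matrix_matrix_mult_def transpose_def)
    finally show ?thesis
      using that(1) by (simp add: orthogonal_matrix_def)
  qed
  show ?thesis
    using column_iff rows
    by (auto simp: pointwise_stabilizer_def SO_def identity_on_axes_def)
qed

definition submatrix :: "('k \<Rightarrow> 'n) \<Rightarrow> 'a^'n^'n \<Rightarrow> 'a^'k^'k" where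
  "submatrix e M = (\<chi> a b. M $ e a $ e b)"

definition extend_by_identity :: "('k \<Rightarrow> 'n) \<Rightarrow> 'a::zero_neq_one^'k^'k \<Rightarrow> 'a^'n^'n" where
  "extend_by_identity e B =
    (\<chi> i j. if i \<in> range e \<and> j \<in> range e then B $ inv e i $ inv e j else mat 1 $ i $ j)"

lemma submatrix_transpose: "submatrix e (transpose M) = transpose (submatrix e M)"
  by (simp add: submatrix_def transpose_def)

lemma submatrix_mat_1: "inj e \<Longrightarrow> submatrix e (mat 1) = mat 1"
  by (simp add: submatrix_def mat_def vec_eq_iff inj_eq)

lemma submatrix_mult:
  fixes M N :: "'a::semiring_1^'n^'n" and e :: "'k::finite \<Rightarrow> 'n::finite"
  assumes e: "inj e" and M: "identity_on_axes (- range e) M"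
  shows "submatrix e (M ** N) = submatrix e M ** submatrix e N"
proof -
  have "(\<Sum>k\<in>UNIV. M $ e a $ k * N $ k $ e b) = (\<Sum>k\<in>range e. M $ e a $ k * N $ k $ e b)" for a b
  proof (rule sum.mono_neutral_right)
    show "\<forall>k\<in>UNIV - range e. M $ e a $ k * N $ k $ e b = 0"
      using M by (auto simp: identity_on_axes_def mat_def)
  qed auto
  also have "\<dots> a b = (\<Sum>c\<in>UNIV. M $ e a $ e c * N $ e c $ e b)" for a b
    using e by (simp add: sum.reindex)
  finally show ?thesis
    by (simp add: submatrix_def matrix_matrix_mult_def)
qed

lemma submatrix_extend_by_identity: "inj e \<Longrightarrow> submatrix e (extend_by_identity e B) = B"
  by (simp add: submatrix_def extend_by_identity_def)

lemma identity_on_axes_extend_by_identity: "identity_on_axes (- range e) (extend_by_identity e B)"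
  by (auto simp: identity_on_axes_def extend_by_identity_def)

lemma extend_by_identity_submatrix:
  assumes "identity_on_axes (- range e) M"
  shows "extend_by_identity e (submatrix e M) = M"
  using assms by (auto simp: vec_eq_iff extend_by_identity_def submatrix_def identity_on_axes_def f_inv_into_f)

lemma submatrix_eq_iff:
  assumes "identity_on_axes (- range e) M" "identity_on_axes (- range e) N"
  shows "submatrix e M = submatrix e N \<longleftrightarrow> M = N"
  using assms by (metis extend_by_identity_submatrix)

lemma orthogonal_matrix_submatrix_iff:
  fixes M :: "real^'n^'n" and e :: "'k::finite \<Rightarrow> 'n::finite"
  assumes e: "inj e" and M: "identity_on_axes (- range e) M"
  shows "orthogonal_matrix (submatrix e M) \<longleftrightarrow> orthogonal_matrix M"
proof -
  have "identity_on_axes (- range e) (transpose M ** M)" "identity_on_axes (- range e) (M ** transpose M)"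
    using M by (simp_all add: identity_on_axes_mult)
  then have "transpose M ** M = mat 1 \<longleftrightarrow> submatrix e (transpose M ** M) = submatrix e (mat 1)"
    "M ** transpose M = mat 1 \<longleftrightarrow> submatrix e (M ** transpose M) = submatrix e (mat 1)"
    by (simp_all add: submatrix_eq_iff)
  then have "transpose M ** M = mat 1 \<longleftrightarrow> transpose (submatrix e M) ** submatrix e M = mat 1"
    "M ** transpose M = mat 1 \<longleftrightarrow> submatrix e M ** transpose (submatrix e M) = mat 1"
    using M e by (simp_all add: submatrix_mult submatrix_transpose submatrix_mat_1)
  then show ?thesis
    by (simp add: orthogonal_matrix_def)
qed

(* The block determinant identity det (diag(I, B)) = det B is taken as a hypothesis; it is
   verified below for the embeddings needed in dimension 5. *)
lemma iso_to_SO_pointwise_stabilizer_axes: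
  fixes e :: "'k::finite \<Rightarrow> 'n::finite"
  assumes e: "inj e"
    and det: "\<And>M :: real^'n^'n. identity_on_axes (- range e) M \<Longrightarrow> det (submatrix e M) = det M"
  shows "iso_to_SO (pointwise_stabilizer ((\<lambda>j. axis j 1) ` (- range e))) TYPE('k)"
proof -
  have SO_iff: "submatrix e M \<in> SO TYPE('k) \<longleftrightarrow> M \<in> SO TYPE('n)"
    if "identity_on_axes (- range e) M" for M
    using that det orthogonal_matrix_submatrix_iff[OF e that] by (simp add: SO_def)
  have "extend_by_identity e B \<in> SO TYPE('n)" if "B \<in> SO TYPE('k)" for B
    using that SO_iff[OF identity_on_axes_extend_by_identity] by (simp add: submatrix_extend_by_identity e)
  then have "bij_betw (submatrix e) (pointwise_stabilizer ((\<lambda>j. axis j 1) ` (- range e))) (SO TYPE('k))"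
    by (intro bij_betw_byWitness[where f' = "extend_by_identity e"])
      (auto simp: pointwise_stabilizer_axes_iff SO_iff identity_on_axes_extend_by_identity
        extend_by_identity_submatrix submatrix_extend_by_identity e)
  moreover have "\<forall>A\<in>pointwise_stabilizer ((\<lambda>j. axis j 1) ` (- range e)).
      \<forall>B\<in>pointwise_stabilizer ((\<lambda>j. axis j 1) ` (- range e)).
        submatrix e (A ** B) = submatrix e A ** submatrix e B"
    by (simp add: pointwise_stabilizer_axes_iff submatrix_mult e)
  ultimately show ?thesis
    unfolding iso_to_SO_def by blast
qed

lemma iso_to_SO_pointwise_stabilizer_subspace:
  fixes V :: "(real^'n) set" and e :: "'k::finite \<Rightarrow> 'n::finite"
  assumes V: "subspace V" and dim_V: "dim V + CARD('k) = CARD('n)" and e: "inj e"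
    and det: "\<And>M :: real^'n^'n. identity_on_axes (- range e) M \<Longrightarrow> det (submatrix e M) = det M"
  shows "iso_to_SO (pointwise_stabilizer V) TYPE('k)"
proof -
  have "card (- range e) = dim V"
    using dim_V e by (simp add: Compl_eq_Diff_UNIV card_Diff_subset card_image)
  then obtain Q where Q: "orthogonal_matrix Q"
    "pointwise_stabilizer V =
      (\<lambda>A. Q ** A ** transpose Q) ` pointwise_stabilizer ((\<lambda>j. axis j 1) ` (- range e))"
    by (rule pointwise_stabilizer_subspace_conjugate[OF V])
  show ?thesis
    unfolding Q(2)
    by (rule iso_to_SO_orthogonal_conjugate[OF Q(1) iso_to_SO_pointwise_stabilizer_axes[OF e det]])
qed

lemma SO_1: "SO TYPE(1) = {mat 1}"
proof -
  have "A = mat 1" if "det A = 1" for A :: "real^1^1"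
    using that by (simp add: det_1 vec_eq_iff mat_def)
  then show ?thesis
    by (auto simp: SO_def orthogonal_matrix_id)
qed

lemma iso_to_SO_1_eq_singleton:
  assumes "iso_to_SO G TYPE(1)" "mat 1 \<in> G"
  shows "G = {mat 1}"
proof -
  have "card G = 1"
    using assms(1) bij_betw_same_card by (fastforce simp: iso_to_SO_def SO_1)
  then show ?thesis
    using assms(2) by (metis card_1_singletonE singletonD)
qed

lemma UNIV_5: "(UNIV :: 5 set) = {1, 2, 3, 4, 5}"
proof -
  have "card {1, 2, 3, 4, 5 :: 5} = CARD(5)"
    by simp
  then show ?thesis
    by (metis card_subset_eq finite subset_UNIV)
qed

definition last_three :: "3 \<Rightarrow> 5" where
  "last_three a = (if a = 1 then 3 else if a = 2 then 4 else 5)"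

definition last_two :: "2 \<Rightarrow> 5" where
  "last_two a = (if a = 1 then 4 else 5)"

definition last_one :: "1 \<Rightarrow> 5" where
  "last_one a = 5"

lemma range_last_three: "range last_three = {3, 4, 5}"
  by (simp only: UNIV_3 image_insert image_empty) (simp add: last_three_def)

lemma range_last_two: "range last_two = {4, 5}"
  by (simp only: UNIV_2 image_insert image_empty) (simp add: last_two_def)

lemma inj_last_three: "inj last_three"
  by (auto simp: inj_def last_three_def forall_3)

lemma inj_last_two: "inj last_two"
  by (auto simp: inj_def last_two_def forall_2)

lemma inj_last_one: "inj last_one"
  by (simp add: inj_def)

lemma det_submatrix_last_three:
  fixes M :: "real^5^5"
  assumes "identity_on_axes (- range last_three) M"
  shows "det (submatrix last_three M) = det M"
proof -
  have M: "M $ i $ j = (if i = j then 1 else 0)" if "i \<in> {1, 2} \<or> j \<in> {1, 2}" for i j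
    using identity_on_axes_entry[OF assms, of i j] that by (auto simp: range_last_three mat_def)
  have f1: "finite {2::5, 3, 4, 5}" "1 \<notin> {2::5, 3, 4, 5}" by auto
  have f2: "finite {3::5, 4, 5}" "2 \<notin> {3::5, 4, 5}" by auto
  have f3: "finite {4::5, 5}" "3 \<notin> {4::5, 5}" by auto
  have f4: "finite {5::5}" "4 \<notin> {5::5}" by auto
  have "det (submatrix last_three M) = M$3$3 * M$4$4 * M$5$5 + M$3$4 * M$4$5 * M$5$3
     + M$3$5 * M$4$3 * M$5$4 - M$3$3 * M$4$5 * M$5$4 - M$3$4 * M$4$3 * M$5$5
     - M$3$5 * M$4$4 * M$5$3"
    by (simp add: det_3 submatrix_def last_three_def)
  also have "\<dots> = det M"
    \<comment> \<open>Leibniz expansion: every permutation moving 1 or 2 contributes 0.\<close>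
    unfolding det_def UNIV_5
    unfolding sum_over_permutations_insert[OF f1] sum_over_permutations_insert[OF f2]
      sum_over_permutations_insert[OF f3] sum_over_permutations_insert[OF f4] permutes_sing
    by (simp add: M sign_swap_id permutation_swap_id sign_compose sign_id swap_id_eq algebra_simps)
  finally show ?thesis .
qed

lemma det_submatrix_last_two:
  fixes M :: "real^5^5"
  assumes M: "identity_on_axes (- range last_two) M"
  shows "det (submatrix last_two M) = det M"
proof -
  have "identity_on_axes (- range last_three) M"
    using M by (rule identity_on_axes_antimono[rotated]) (simp add: range_last_two range_last_three)
  moreover have "M$3$3 = 1" "M$3$4 = 0" "M$3$5 = 0" "M$4$3 = 0" "M$5$3 = 0"
    using identity_on_axes_entry[OF M] by (simp_all add: range_last_two mat_def)
  ultimately show ?thesis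
    using det_submatrix_last_three[of M]
    by (simp add: det_2 det_3 submatrix_def last_two_def last_three_def)
qed

lemma det_submatrix_last_one:
  fixes M :: "real^5^5"
  assumes M: "identity_on_axes (- range last_one) M"
  shows "det (submatrix last_one M) = det M"
proof -
  have "identity_on_axes (- range last_three) M"
    using M by (rule identity_on_axes_antimono[rotated]) (simp add: last_one_def range_last_three)
  moreover have "M$3$3 = 1" "M$4$4 = 1" "M$3$4 = 0" "M$3$5 = 0" "M$4$3 = 0" "M$4$5 = 0"
    "M$5$3 = 0" "M$5$4 = 0"
    using identity_on_axes_entry[OF M] by (simp_all add: last_one_def mat_def)
  ultimately show ?thesis
    using det_submatrix_last_three[of M]
    by (simp add: det_1 det_3 submatrix_def last_one_def last_three_def)
qed

lemma unit_vectors_on_line: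
  fixes u :: "nat \<Rightarrow> 'a::euclidean_space"
  assumes unit: "\<forall>i<n. norm (u i) = 1" and n: "0 < n" and dim: "dim (u ` {..<n}) \<le> 1"
  obtains \<epsilon> :: "nat \<Rightarrow> real"
  where "\<forall>i<n. \<epsilon> i = 1 \<or> \<epsilon> i = -1" "\<epsilon> 0 = 1" "\<forall>i<n. u i = \<epsilon> i *\<^sub>R u 0"
proof -
  have u0: "u 0 \<noteq> 0"
    using unit n by auto
  have in_line: "u i \<in> span {u 0}" if "i < n" for i
  proof (rule ccontr)
    assume "u i \<notin> span {u 0}"
    then have "independent {u i, u 0}" "u i \<noteq> u 0"
      using u0 span_base[of "u 0" "{u 0}"] by (auto simp: independent_insert)
    moreover have "{u i, u 0} \<subseteq> u ` {..<n}"
      using that n by auto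
    ultimately have "card {u i, u 0} \<le> dim (u ` {..<n})"
      by (intro independent_card_le_dim)
    then show False
      using dim \<open>u i \<noteq> u 0\<close> by simp
  qed
  have "u i = u 0 \<or> u i = - u 0" if i: "i < n" for i
  proof -
    obtain c where c: "u i = c *\<^sub>R u 0"
      using in_line[OF i] by (auto simp: span_singleton)
    have "\<bar>c\<bar> = norm (u i)"
      using c unit n by simp
    then have "\<bar>c\<bar> = 1"
      using unit i by simp
    then show ?thesis
      using c by (cases "c \<ge> 0") auto
  qed
  moreover have "u 0 \<noteq> - u 0"
    using u0 by (simp add: eq_neg_iff_add_eq_0 flip: scaleR_2)
  ultimately show ?thesis
    by (intro that[of "\<lambda>i. if u i = u 0 then 1 else -1"]) auto
qed

lemma polygon_space_dim_ge_2:
  assumes "0 < n"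
    and signs: "\<forall>\<epsilon>::nat \<Rightarrow> real. (\<forall>i<n. \<epsilon> i = 1 \<or> \<epsilon> i = -1) \<and> \<epsilon> 0 = 1
            \<longrightarrow> (\<Sum>i<n. \<epsilon> i * r i) \<noteq> 0"
    and "u \<in> polygon_space n r"
  shows "2 \<le> dim (u ` {..<n})"
proof (rule ccontr)
  have unit: "\<forall>i<n. norm (u i) = 1" and closed: "(\<Sum>i<n. r i *\<^sub>R u i) = 0"
    using assms(3) by (auto simp: polygon_space_def)
  assume "\<not> 2 \<le> dim (u ` {..<n})"
  then have "dim (u ` {..<n}) \<le> 1"
    by simp
  then obtain \<epsilon> :: "nat \<Rightarrow> real" where \<epsilon>: "\<forall>i<n. \<epsilon> i = 1 \<or> \<epsilon> i = -1" "\<epsilon> 0 = 1"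
    "\<forall>i<n. u i = \<epsilon> i *\<^sub>R u 0"
    using unit_vectors_on_line[OF unit \<open>0 < n\<close>] by blast
  have "(\<Sum>i<n. r i *\<^sub>R u i) = (\<Sum>i<n. (\<epsilon> i * r i) *\<^sub>R u 0)"
  proof (rule sum.cong[OF refl])
    fix i assume "i \<in> {..<n}"
    then have "u i = \<epsilon> i *\<^sub>R u 0"
      using \<epsilon>(3) by blast
    then show "r i *\<^sub>R u i = (\<epsilon> i * r i) *\<^sub>R u 0"
      by simp
  qed
  then have "(\<Sum>i<n. \<epsilon> i * r i) *\<^sub>R u 0 = 0"
    using closed by (simp add: scaleR_sum_left)
  then have "(\<Sum>i<n. \<epsilon> i * r i) = 0"
    using unit \<open>0 < n\<close> by auto
  then show False
    using signs \<epsilon>(1,2) by blast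
qed

lemma pointwise_stabilizer_dim_ge_4:
  fixes S :: "(real^5) set"
  assumes "4 \<le> dim S"
  shows "pointwise_stabilizer S = {mat 1}"
proof -
  obtain W where W: "subspace W" "W \<subseteq> span S" "dim W = 4"
    using choose_subspace_of_subspace[OF assms] .
  have "iso_to_SO (pointwise_stabilizer W) TYPE(1)"
    using iso_to_SO_pointwise_stabilizer_subspace[OF W(1) _ inj_last_one det_submatrix_last_one] W(3)
    by simp
  then have "pointwise_stabilizer W = {mat 1}"
    using iso_to_SO_1_eq_singleton mat_1_in_pointwise_stabilizer by blast
  moreover have "pointwise_stabilizer S \<subseteq> pointwise_stabilizer W"
    using pointwise_stabilizer_antimono[OF W(2)] by simp
  ultimately show ?thesis
    using mat_1_in_pointwise_stabilizer by blast
qed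

theorem lemma2p3:
  fixes n :: nat and r :: "nat \<Rightarrow> real" and u :: "nat \<Rightarrow> real^5"
  assumes "n \<ge> 3"
    and "\<forall>i<n. r i > 0"
    and "\<forall>j<n. 2 * r j \<le> (\<Sum>i<n. r i)"
    and "\<forall>\<epsilon>::nat \<Rightarrow> real. (\<forall>i<n. \<epsilon> i = 1 \<or> \<epsilon> i = -1) \<and> \<epsilon> 0 = 1
            \<longrightarrow> (\<Sum>i<n. \<epsilon> i * r i) \<noteq> 0"
    and "u \<in> polygon_space n r"
    and "stabilizer n u \<noteq> {mat 1}"
  shows "iso_to_SO (stabilizer n u) TYPE(2) \<or> iso_to_SO (stabilizer n u) TYPE(3)"
proof -
  define V where "V = span (u ` {..<n})"
  have stabilizer_V: "stabilizer n u = pointwise_stabilizer V"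
    by (simp add: V_def stabilizer_eq_pointwise_stabilizer)
  have "2 \<le> dim V"
    using polygon_space_dim_ge_2 assms(1,4,5) by (simp add: V_def dim_span)
  moreover have "\<not> 4 \<le> dim V"
  proof
    assume "4 \<le> dim V"
    then have "stabilizer n u = {mat 1}"
      by (simp add: stabilizer_V pointwise_stabilizer_dim_ge_4)
    with assms(6) show False ..
  qed
  ultimately consider "dim V + CARD(3) = CARD(5)" | "dim V + CARD(2) = CARD(5)"
    by fastforce
  then show ?thesis
  proof cases
    case 1
    have "iso_to_SO (pointwise_stabilizer V) TYPE(3)"
      by (rule iso_to_SO_pointwise_stabilizer_subspace[OF _ 1 inj_last_three det_submatrix_last_three])
        (simp add: V_def)
    then show ?thesis
      by (simp add: stabilizer_V)
  next
    case 2
    have "iso_to_SO (pointwise_stabilizer V) TYPE(2)"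
      by (rule iso_to_SO_pointwise_stabilizer_subspace[OF _ 2 inj_last_two det_submatrix_last_two])
        (simp add: V_def)
    then show ?thesis
      by (simp add: stabilizer_V)
  qed
qed

end
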